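(* Let $C$ be a coalgebra over a field. If $C$ is left quasi-co-Frobenius, then $C^*$ is left Rat-Kasch.
   Context: Every right $C$-comodule $M$ is a left $C^*$-module via $f\rightharpoonup m=\sum m_0f(m_1)$; the left $C^*$-modules arising this way are called rational, and rational left $C^*$-modules are the same as right $C$-comodules. In particular $C$ is a left (and similarly right) $C^*$-module. $C$ is left quasi-co-Frobenius (left QcF) if $C$, as a left $C^*$-module, embeds in a direct product of copies of $C^*$ (equivalently, $C$ is projective as a right $C$-comodule). $C^*$ is left Rat-Kasch if every simple rational left $C^*$-module embeds in $C^*$ as a left $C^*$-module. *)

theory Defs
  imports Complex_Main
begin

text \<open>Elements of tensor products are represented by finite
lists of simple tensors; all identities between tensors are tested by pairing
with Vector_Spaces.linear functionals (the canonical maps V1 x...x Vn tensor to multilinear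
forms on the duals are injective over a field).\<close>

definition dual :: "('k::field \<Rightarrow> 'c::ab_group_add \<Rightarrow> 'c) \<Rightarrow> ('c \<Rightarrow> 'k) set" where
  "dual sc = {f. Vector_Spaces.linear sc (*) f}"

definition tens :: "('a \<times> 'b) list \<Rightarrow> ('a \<Rightarrow> 'k::comm_ring_1) \<Rightarrow> ('b \<Rightarrow> 'k) \<Rightarrow> 'k" where
  "tens xs f g = (\<Sum>(a,b)\<leftarrow>xs. f a * g b)"

definition is_coalgebra ::
  "('k::field \<Rightarrow> 'c::ab_group_add \<Rightarrow> 'c) \<Rightarrow> ('c \<Rightarrow> ('c \<times> 'c) list) \<Rightarrow> ('c \<Rightarrow> 'k) \<Rightarrow> bool" where
  "is_coalgebra sc Delta eps \<longleftrightarrow>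
     vector_space sc \<and> eps \<in> dual sc \<and>
     \<comment> \<open>Delta : C \<rightarrow> C \<otimes> C is k-Vector_Spaces.linear\<close>
     (\<forall>f\<in>dual sc. \<forall>g\<in>dual sc. \<forall>x y r.
        tens (Delta (x + y)) f g = tens (Delta x) f g + tens (Delta y) f g \<and>
        tens (Delta (sc r x)) f g = r * tens (Delta x) f g) \<and>
     \<comment> \<open>counit property\<close>
     (\<forall>c. (\<Sum>(a,b)\<leftarrow>Delta c. sc (eps a) b) = c \<and> (\<Sum>(a,b)\<leftarrow>Delta c. sc (eps b) a) = c) \<and>
     \<comment> \<open>coassociativity\<close>
     (\<forall>f\<in>dual sc. \<forall>g\<in>dual sc. \<forall>h\<in>dual sc. \<forall>c.
        (\<Sum>(a,b)\<leftarrow>Delta c. tens (Delta a) f g * h b) = (\<Sum>(a,b)\<leftarrow>Delta c. f a * tens (Delta b) g h))"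

definition conv :: "('c \<Rightarrow> ('c \<times> 'c) list) \<Rightarrow> ('c \<Rightarrow> 'k::comm_ring_1) \<Rightarrow> ('c \<Rightarrow> 'k) \<Rightarrow> 'c \<Rightarrow> 'k" where
  "conv Delta f g = (\<lambda>c. tens (Delta c) f g)"

definition hit :: "('k::field \<Rightarrow> 'c::ab_group_add \<Rightarrow> 'c) \<Rightarrow> ('c \<Rightarrow> ('c \<times> 'c) list) \<Rightarrow> ('c \<Rightarrow> 'k) \<Rightarrow> 'c \<Rightarrow> 'c" where
  "hit sc Delta f c = (\<Sum>(a,b)\<leftarrow>Delta c. sc (f b) a)"

definition is_left_dual_module ::
  "('k::field \<Rightarrow> 'c::ab_group_add \<Rightarrow> 'c) \<Rightarrow> ('c \<Rightarrow> ('c \<times> 'c) list) \<Rightarrow> ('c \<Rightarrow> 'k) \<Rightarrow>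
   ('k \<Rightarrow> 'm::ab_group_add \<Rightarrow> 'm) \<Rightarrow> (('c \<Rightarrow> 'k) \<Rightarrow> 'm \<Rightarrow> 'm) \<Rightarrow> bool" where
  "is_left_dual_module sc Delta eps smM act \<longleftrightarrow>
     vector_space smM \<and>
     (\<forall>f\<in>dual sc. Vector_Spaces.linear smM smM (act f)) \<and>
     (\<forall>f\<in>dual sc. \<forall>g\<in>dual sc. \<forall>m r.
        act (\<lambda>c. f c + g c) m = act f m + act g m \<and>
        act (\<lambda>c. r * f c) m = smM r (act f m) \<and>
        act (conv Delta f g) m = act f (act g m)) \<and>
     (\<forall>m. act eps m = m)"

definition is_right_comodule ::
  "('k::field \<Rightarrow> 'c::ab_group_add \<Rightarrow> 'c) \<Rightarrow> ('c \<Rightarrow> ('c \<times> 'c) list) \<Rightarrow> ('c \<Rightarrow> 'k) \<Rightarrow>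
   ('k \<Rightarrow> 'm::ab_group_add \<Rightarrow> 'm) \<Rightarrow> ('m \<Rightarrow> ('m \<times> 'c) list) \<Rightarrow> bool" where
  "is_right_comodule sc Delta eps smM rho \<longleftrightarrow>
     vector_space smM \<and>
     (\<forall>\<mu>\<in>dual smM. \<forall>f\<in>dual sc. \<forall>x y r.
        tens (rho (x + y)) \<mu> f = tens (rho x) \<mu> f + tens (rho y) \<mu> f \<and>
        tens (rho (smM r x)) \<mu> f = r * tens (rho x) \<mu> f) \<and>
     (\<forall>m. (\<Sum>(x,c)\<leftarrow>rho m. smM (eps c) x) = m) \<and>
     (\<forall>\<mu>\<in>dual smM. \<forall>f\<in>dual sc. \<forall>g\<in>dual sc. \<forall>m.
        (\<Sum>(x,c)\<leftarrow>rho m. tens (rho x) \<mu> f * g c) = (\<Sum>(x,c)\<leftarrow>rho m. \<mu> x * tens (Delta c) f g))"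

definition is_rational ::
  "('k::field \<Rightarrow> 'c::ab_group_add \<Rightarrow> 'c) \<Rightarrow> ('c \<Rightarrow> ('c \<times> 'c) list) \<Rightarrow> ('c \<Rightarrow> 'k) \<Rightarrow>
   ('k \<Rightarrow> 'm::ab_group_add \<Rightarrow> 'm) \<Rightarrow> (('c \<Rightarrow> 'k) \<Rightarrow> 'm \<Rightarrow> 'm) \<Rightarrow> bool" where
  "is_rational sc Delta eps smM act \<longleftrightarrow>
     (\<exists>rho. is_right_comodule sc Delta eps smM rho \<and>
        (\<forall>f\<in>dual sc. \<forall>m. act f m = (\<Sum>(x,c)\<leftarrow>rho m. smM (f c) x)))"

definition is_submodule ::
  "('k::field \<Rightarrow> 'c::ab_group_add \<Rightarrow> 'c) \<Rightarrow> ('k \<Rightarrow> 'm::ab_group_add \<Rightarrow> 'm) \<Rightarrow>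
   (('c \<Rightarrow> 'k) \<Rightarrow> 'm \<Rightarrow> 'm) \<Rightarrow> 'm set \<Rightarrow> bool" where
  "is_submodule sc smM act N \<longleftrightarrow>
     0 \<in> N \<and> (\<forall>x\<in>N. \<forall>y\<in>N. x + y \<in> N) \<and> (\<forall>r. \<forall>x\<in>N. smM r x \<in> N) \<and>
     (\<forall>f\<in>dual sc. \<forall>x\<in>N. act f x \<in> N)"

definition is_simple_module ::
  "('k::field \<Rightarrow> 'c::ab_group_add \<Rightarrow> 'c) \<Rightarrow> ('c \<Rightarrow> ('c \<times> 'c) list) \<Rightarrow> ('c \<Rightarrow> 'k) \<Rightarrow>
   ('k \<Rightarrow> 'm::ab_group_add \<Rightarrow> 'm) \<Rightarrow> (('c \<Rightarrow> 'k) \<Rightarrow> 'm \<Rightarrow> 'm) \<Rightarrow> bool" where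
  "is_simple_module sc Delta eps smM act \<longleftrightarrow>
     is_left_dual_module sc Delta eps smM act \<and> (UNIV :: 'm set) \<noteq> {0} \<and>
     (\<forall>N. is_submodule sc smM act N \<longrightarrow> N = {0} \<or> N = UNIV)"

definition embeds_in_product ::
  "('k::field \<Rightarrow> 'c::ab_group_add \<Rightarrow> 'c) \<Rightarrow> ('c \<Rightarrow> ('c \<times> 'c) list) \<Rightarrow> ('c \<Rightarrow> 'i \<Rightarrow> 'c \<Rightarrow> 'k) \<Rightarrow> bool" where
  "embeds_in_product sc Delta \<phi> \<longleftrightarrow>
     inj \<phi> \<and> (\<forall>x i. \<phi> x i \<in> dual sc) \<and>
     (\<forall>x y. \<phi> (x + y) = (\<lambda>i c. \<phi> x i c + \<phi> y i c)) \<and>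
     (\<forall>f\<in>dual sc. \<forall>x i. \<phi> (hit sc Delta f x) i = conv Delta f (\<phi> x i))"

definition left_QcF ::
  "'i itself \<Rightarrow> ('k::field \<Rightarrow> 'c::ab_group_add \<Rightarrow> 'c) \<Rightarrow> ('c \<Rightarrow> ('c \<times> 'c) list) \<Rightarrow> bool" where
  "left_QcF (_ :: 'i itself) sc Delta \<longleftrightarrow> (\<exists>\<phi> :: 'c \<Rightarrow> 'i \<Rightarrow> 'c \<Rightarrow> 'k. embeds_in_product sc Delta \<phi>)"

definition embeds_in_dual ::
  "('k::field \<Rightarrow> 'c::ab_group_add \<Rightarrow> 'c) \<Rightarrow> ('c \<Rightarrow> ('c \<times> 'c) list) \<Rightarrow>
   (('c \<Rightarrow> 'k) \<Rightarrow> 'm::ab_group_add \<Rightarrow> 'm) \<Rightarrow> bool" where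
  "embeds_in_dual sc Delta act \<longleftrightarrow>
     (\<exists>\<phi> :: 'm \<Rightarrow> 'c \<Rightarrow> 'k. inj \<phi> \<and> (\<forall>m. \<phi> m \<in> dual sc) \<and>
        (\<forall>m n. \<phi> (m + n) = (\<lambda>c. \<phi> m c + \<phi> n c)) \<and>
        (\<forall>f\<in>dual sc. \<forall>m. \<phi> (act f m) = conv Delta f (\<phi> m)))"

definition left_Rat_Kasch ::
  "'m::ab_group_add itself \<Rightarrow> ('k::field \<Rightarrow> 'c::ab_group_add \<Rightarrow> 'c) \<Rightarrow> ('c \<Rightarrow> ('c \<times> 'c) list) \<Rightarrow> ('c \<Rightarrow> 'k) \<Rightarrow> bool" where
  "left_Rat_Kasch (_ :: 'm itself) sc Delta eps \<longleftrightarrow>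
     (\<forall>(smM :: 'k \<Rightarrow> 'm \<Rightarrow> 'm) act.
        is_simple_module sc Delta eps smM act \<and> is_rational sc Delta eps smM act \<longrightarrow>
        embeds_in_dual sc Delta act)"

end

theory Submission
  imports Defs "HOL-Library.Function_Algebras"
begin

text \<open>Let \<open>M\<close> be a simple rational left \<open>C\<^sup>*\<close>-module with comodule structure
\<open>m \<mapsto> \<Sum> m\<^sub>0 \<otimes> m\<^sub>1\<close>. For any functional \<open>\<mu>\<close> on \<open>M\<close> the coefficient map
\<open>m \<mapsto> \<Sum> \<mu>(m\<^sub>0) m\<^sub>1\<close> is a morphism of left \<open>C\<^sup>*\<close>-modules \<open>M \<rightarrow> C\<close>, and by the
counit property it does not vanish on \<open>m\<close> whenever \<open>\<mu>(m) \<noteq> 0\<close>. Composing with an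
embedding of \<open>C\<close> into a product of copies of \<open>C\<^sup>*\<close> and choosing a coordinate on
which the image of \<open>m\<close> is nonzero gives a nonzero module morphism \<open>M \<rightarrow> C\<^sup>*\<close>;
its kernel is a proper submodule, hence zero by simplicity.\<close>

lemma (in additive) sum_list_map: "f (sum_list (map g xs)) = (\<Sum>x\<leftarrow>xs. f (g x))"
  by (induction xs) (simp_all add: zero add)

lemma vector_space_mult_self: "vector_space ((*) :: 'k::field \<Rightarrow> 'k \<Rightarrow> 'k)"
  by unfold_locales (auto simp: algebra_simps)

lemma dual_separates:
  fixes sc :: "'k::field \<Rightarrow> 'c::ab_group_add \<Rightarrow> 'c"
  assumes "vector_space sc" and "x \<noteq> 0"
  shows "\<exists>g\<in>dual sc. g x \<noteq> 0"
proof -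
  interpret p: vector_space_pair sc "(*) :: 'k \<Rightarrow> 'k \<Rightarrow> 'k"
    using assms(1) vector_space_mult_self by (simp add: vector_space_pair_def)
  have "p.vs1.independent {x}"
    using assms(2) p.vs1.independent_insertI[of x "{}"] by simp
  from p.linear_independent_extend[OF this, of "\<lambda>_. 1"]
  obtain g where "Vector_Spaces.linear sc (*) g" "g x = 1" by auto
  then show ?thesis unfolding dual_def by force
qed

lemma dual_additive: "g \<in> dual sc \<Longrightarrow> additive g"
  unfolding dual_def by unfold_locales (simp add: Vector_Spaces.linear_iff)

lemma dual_scale: "g \<in> dual sc \<Longrightarrow> g (sc r x) = r * g x"
  unfolding dual_def by (simp add: Vector_Spaces.linear_iff)

lemma dual_eqI:
  assumes "vector_space sc" and "\<And>g. g \<in> dual sc \<Longrightarrow> g x = g y"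
  shows "x = y"
proof (rule ccontr)
  assume "x \<noteq> y"
  then obtain g where g: "g \<in> dual sc" "g (x - y) \<noteq> 0"
    using dual_separates[OF assms(1)] by (metis right_minus_eq)
  then show False
    using assms(2) additive.diff[OF dual_additive[OF g(1)]] by simp
qed

lemma dual_mult_left: "g \<in> dual sc \<Longrightarrow> (\<lambda>c. r * g c) \<in> dual sc"
  unfolding dual_def by (auto simp: Vector_Spaces.linear_iff algebra_simps)

lemma left_dual_module_scale_eq_act:
  assumes "is_left_dual_module sc Delta eps smM act" and "eps \<in> dual sc"
  shows "smM r m = act (\<lambda>c. r * eps c) m"
  using assms unfolding is_left_dual_module_def by simp

lemma left_dual_module_hom_kernel_is_submodule:
  assumes M: "is_left_dual_module sc Delta eps smM act" and eps: "eps \<in> dual sc"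
    and \<Theta>: "additive \<Theta>"
    and \<Theta>_act: "\<And>f m. f \<in> dual sc \<Longrightarrow> \<Theta> (act f m) = conv Delta f (\<Theta> m)"
  shows "is_submodule sc smM act {m. \<Theta> m = 0}"
proof -
  have conv_zero: "conv Delta f 0 = 0" if "f \<in> dual sc" for f
    unfolding conv_def tens_def by (simp add: case_prod_beta' zero_fun_def)
  have act_closed: "act f m \<in> {m. \<Theta> m = 0}" if "f \<in> dual sc" "\<Theta> m = 0" for f m
    using that \<Theta>_act[OF that(1)] conv_zero[OF that(1)] by simp
  show ?thesis
    unfolding is_submodule_def
    using act_closed dual_mult_left[OF eps]
    by (simp add: additive.zero[OF \<Theta>] additive.add[OF \<Theta>]
        left_dual_module_scale_eq_act[OF M eps])
qed

lemma simple_module_hom_inj: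
  assumes M: "is_simple_module sc Delta eps smM act" and eps: "eps \<in> dual sc"
    and \<Theta>: "additive \<Theta>"
    and \<Theta>_act: "\<And>f m. f \<in> dual sc \<Longrightarrow> \<Theta> (act f m) = conv Delta f (\<Theta> m)"
    and nonzero: "\<Theta> m \<noteq> 0"
  shows "inj \<Theta>"
proof -
  have "is_left_dual_module sc Delta eps smM act"
    and simple: "\<And>N. is_submodule sc smM act N \<Longrightarrow> N = {0} \<or> N = UNIV"
    using M unfolding is_simple_module_def by auto
  then have "is_submodule sc smM act {m. \<Theta> m = 0}"
    using left_dual_module_hom_kernel_is_submodule eps \<Theta> \<Theta>_act by blast
  moreover have "m \<notin> {m. \<Theta> m = 0}"
    using nonzero by simp
  ultimately have kernel: "{m. \<Theta> m = 0} = {0}"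
    using simple by blast
  show ?thesis
  proof (rule injI)
    fix a b assume "\<Theta> a = \<Theta> b"
    then have "a - b \<in> {m. \<Theta> m = 0}"
      by (simp add: additive.diff[OF \<Theta>])
    then show "a = b"
      using kernel by simp
  qed
qed

definition comodule_coeff ::
  "('k \<Rightarrow> 'c::ab_group_add \<Rightarrow> 'c) \<Rightarrow> ('m \<Rightarrow> ('m \<times> 'c) list) \<Rightarrow> ('m \<Rightarrow> 'k) \<Rightarrow> 'm \<Rightarrow> 'c" where
  "comodule_coeff sc rho \<mu> m = (\<Sum>(x,c)\<leftarrow>rho m. sc (\<mu> x) c)"

lemma dual_comodule_coeff:
  "g \<in> dual sc \<Longrightarrow> g (comodule_coeff sc rho \<mu> m) = tens (rho m) \<mu> g"
  unfolding comodule_coeff_def tens_def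
  by (simp add: additive.sum_list_map[OF dual_additive] dual_scale case_prod_beta')

lemma comodule_coeff_additive:
  assumes "vector_space sc" and "is_right_comodule sc Delta eps smM rho" and "\<mu> \<in> dual smM"
  shows "additive (comodule_coeff sc rho \<mu>)"
proof
  fix m n
  show "comodule_coeff sc rho \<mu> (m + n) = comodule_coeff sc rho \<mu> m + comodule_coeff sc rho \<mu> n"
    using assms unfolding is_right_comodule_def
    by (intro dual_eqI[OF assms(1)])
       (simp add: dual_comodule_coeff additive.add[OF dual_additive])
qed

lemma counit_comodule_coeff:
  assumes "eps \<in> dual sc" and "is_right_comodule sc Delta eps smM rho" and \<mu>: "\<mu> \<in> dual smM"
  shows "eps (comodule_coeff sc rho \<mu> m) = \<mu> m"
proof -
  have "eps (comodule_coeff sc rho \<mu> m) = (\<Sum>(x,c)\<leftarrow>rho m. \<mu> (smM (eps c) x))"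
    using assms(1) by (simp add: dual_comodule_coeff tens_def dual_scale[OF \<mu>] mult.commute)
  also have "\<dots> = \<mu> (\<Sum>(x,c)\<leftarrow>rho m. smM (eps c) x)"
    by (simp add: additive.sum_list_map[OF dual_additive[OF \<mu>]] case_prod_beta')
  also have "\<dots> = \<mu> m"
    using assms(2) unfolding is_right_comodule_def by simp
  finally show ?thesis .
qed

lemma dual_hit: "g \<in> dual sc \<Longrightarrow> g (hit sc Delta f z) = tens (Delta z) g f"
  unfolding hit_def tens_def
  by (simp add: additive.sum_list_map[OF dual_additive] dual_scale case_prod_beta' mult.commute)

text \<open>Both sides, paired with a functional \<open>g\<close> on \<open>C\<close>, equal
\<open>\<Sum> \<mu>(m\<^sub>0) g(m\<^sub>1\<^sub>1) f(m\<^sub>1\<^sub>2)\<close>: the left side by coassociativity of the comodule,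
the right side by linearity of the comultiplication.\<close>

lemma comodule_coeff_hit:
  assumes C: "is_coalgebra sc Delta eps" and M: "is_right_comodule sc Delta eps smM rho"
    and \<mu>: "\<mu> \<in> dual smM" and f: "f \<in> dual sc"
  shows "comodule_coeff sc rho \<mu> (\<Sum>(x,c)\<leftarrow>rho m. smM (f c) x)
    = hit sc Delta f (comodule_coeff sc rho \<mu> m)"
proof (rule dual_eqI)
  show "vector_space sc" using C unfolding is_coalgebra_def by simp
  fix g assume g: "g \<in> dual sc"
  have tens_rho: "additive (\<lambda>z. tens (rho z) \<mu> g)"
    "tens (rho (smM r x)) \<mu> g = r * tens (rho x) \<mu> g" for r x
    using M \<mu> g unfolding is_right_comodule_def by (unfold_locales; simp)+
  have tens_Delta: "additive (\<lambda>z. tens (Delta z) g f)"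
    "tens (Delta (sc r x)) g f = r * tens (Delta x) g f" for r x
    using C f g unfolding is_coalgebra_def by (unfold_locales; simp)+
  have "g (comodule_coeff sc rho \<mu> (\<Sum>(x,c)\<leftarrow>rho m. smM (f c) x))
      = (\<Sum>(x,c)\<leftarrow>rho m. tens (rho x) \<mu> g * f c)"
    by (simp add: dual_comodule_coeff[OF g] additive.sum_list_map[OF tens_rho(1)]
        tens_rho(2) case_prod_beta' mult.commute)
  also have "\<dots> = (\<Sum>(x,c)\<leftarrow>rho m. \<mu> x * tens (Delta c) g f)"
    using M \<mu> f g unfolding is_right_comodule_def by blast
  also have "\<dots> = tens (Delta (comodule_coeff sc rho \<mu> m)) g f"
    unfolding comodule_coeff_def
    by (simp add: additive.sum_list_map[OF tens_Delta(1)] tens_Delta(2) case_prod_beta')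
  also have "\<dots> = g (hit sc Delta f (comodule_coeff sc rho \<mu> m))"
    by (rule dual_hit[OF g, symmetric])
  finally show "g (comodule_coeff sc rho \<mu> (\<Sum>(x,c)\<leftarrow>rho m. smM (f c) x))
      = g (hit sc Delta f (comodule_coeff sc rho \<mu> m))" .
qed

lemma rational_module_coeff_hom:
  assumes C: "is_coalgebra sc Delta eps" and M: "is_rational sc Delta eps smM act"
    and "vector_space smM" and "m \<noteq> 0"
  obtains \<psi> where "additive \<psi>" and "\<psi> m \<noteq> 0"
    and "\<And>f n. f \<in> dual sc \<Longrightarrow> \<psi> (act f n) = hit sc Delta f (\<psi> n)"
proof -
  obtain rho where rho: "is_right_comodule sc Delta eps smM rho"
    and act_rho: "\<And>f n. f \<in> dual sc \<Longrightarrow> act f n = (\<Sum>(x,c)\<leftarrow>rho n. smM (f c) x)"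
    using M unfolding is_rational_def by blast
  have vs: "vector_space sc" and eps: "eps \<in> dual sc"
    using C unfolding is_coalgebra_def by simp_all
  obtain \<mu> where \<mu>: "\<mu> \<in> dual smM" "\<mu> m \<noteq> 0"
    using dual_separates assms(3,4) by blast
  have "eps (comodule_coeff sc rho \<mu> m) \<noteq> 0"
    unfolding counit_comodule_coeff[OF eps rho \<mu>(1)] by (rule \<mu>(2))
  then have "comodule_coeff sc rho \<mu> m \<noteq> 0"
    using additive.zero[OF dual_additive[OF eps]] by auto
  moreover have "comodule_coeff sc rho \<mu> (act f n) = hit sc Delta f (comodule_coeff sc rho \<mu> n)"
    if "f \<in> dual sc" for f n
    unfolding act_rho[OF that] by (rule comodule_coeff_hit[OF C rho \<mu>(1) that])
  ultimately show ?thesis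
    using that comodule_coeff_additive[OF vs rho \<mu>(1)] by blast
qed

lemma embeds_in_product_coordinate_additive:
  assumes "embeds_in_product sc Delta \<phi>"
  shows "additive (\<lambda>x. \<phi> x i)"
proof
  fix x y
  have "\<phi> (x + y) = (\<lambda>i c. \<phi> x i c + \<phi> y i c)"
    using assms unfolding embeds_in_product_def by blast
  then show "\<phi> (x + y) i = \<phi> x i + \<phi> y i"
    unfolding plus_fun_def by (rule fun_cong)
qed

lemma embeds_in_product_nonzero_coordinate:
  assumes "embeds_in_product sc Delta \<phi>" and "x \<noteq> 0"
  obtains i where "\<phi> x i \<noteq> 0"
proof -
  have "\<phi> 0 i = 0" for i
    using additive.zero[OF embeds_in_product_coordinate_additive[OF assms(1)]] .
  moreover have "\<phi> x \<noteq> \<phi> 0"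
    using assms unfolding embeds_in_product_def by (metis injD)
  ultimately show ?thesis
    using that by (metis ext)
qed

lemma embeds_in_dualI:
  assumes "inj \<Theta>" and "additive \<Theta>" and "\<And>m. \<Theta> m \<in> dual sc"
    and "\<And>f m. f \<in> dual sc \<Longrightarrow> \<Theta> (act f m) = conv Delta f (\<Theta> m)"
  shows "embeds_in_dual sc Delta act"
  unfolding embeds_in_dual_def
  using assms additive.add[OF assms(2)] by (intro exI[of _ \<Theta>]) (simp add: plus_fun_def)

theorem proposition4p2:
  fixes sc :: "'k::field \<Rightarrow> 'c::ab_group_add \<Rightarrow> 'c"
    and Delta :: "'c \<Rightarrow> ('c \<times> 'c) list"
    and eps :: "'c \<Rightarrow> 'k"
  assumes "is_coalgebra sc Delta eps"
    and "left_QcF TYPE('i) sc Delta"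
  shows "left_Rat_Kasch TYPE('m::ab_group_add) sc Delta eps"
  unfolding left_Rat_Kasch_def
proof (intro allI impI, elim conjE)
  fix smM :: "'k \<Rightarrow> 'm \<Rightarrow> 'm" and act
  assume simple: "is_simple_module sc Delta eps smM act"
    and rational: "is_rational sc Delta eps smM act"
  have "vector_space smM"
    using simple unfolding is_simple_module_def is_left_dual_module_def by simp
  obtain m :: 'm where "m \<noteq> 0"
    using simple unfolding is_simple_module_def by auto
  obtain \<psi> where \<psi>: "additive \<psi>" "\<psi> m \<noteq> 0"
    and \<psi>_act: "\<And>f n. f \<in> dual sc \<Longrightarrow> \<psi> (act f n) = hit sc Delta f (\<psi> n)"
    using rational_module_coeff_hom[OF assms(1) rational \<open>vector_space smM\<close> \<open>m \<noteq> 0\<close>] by metis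
  obtain \<phi> :: "'c \<Rightarrow> 'i \<Rightarrow> 'c \<Rightarrow> 'k" where \<phi>: "embeds_in_product sc Delta \<phi>"
    using assms(2) unfolding left_QcF_def by blast
  then obtain i where i: "\<phi> (\<psi> m) i \<noteq> 0"
    using \<psi>(2) by (rule embeds_in_product_nonzero_coordinate)
  define \<Theta> where "\<Theta> n = \<phi> (\<psi> n) i" for n
  have \<Theta>_add: "additive \<Theta>"
    unfolding \<Theta>_def using additive.add[OF \<psi>(1)]
      additive.add[OF embeds_in_product_coordinate_additive[OF \<phi>]]
    by unfold_locales simp
  have \<Theta>_act: "\<Theta> (act f n) = conv Delta f (\<Theta> n)" if "f \<in> dual sc" for f n
    using \<phi> that unfolding \<Theta>_def \<psi>_act[OF that] embeds_in_product_def by simp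
  have eps: "eps \<in> dual sc"
    using assms(1) unfolding is_coalgebra_def by simp
  show "embeds_in_dual sc Delta act"
  proof (rule embeds_in_dualI[OF _ \<Theta>_add _ \<Theta>_act])
    show "inj \<Theta>"
    proof (rule simple_module_hom_inj[OF simple eps \<Theta>_add])
      show "\<Theta> (act f n) = conv Delta f (\<Theta> n)" if "f \<in> dual sc" for f n
        using that by (rule \<Theta>_act)
      show "\<Theta> m \<noteq> 0"
        unfolding \<Theta>_def by (rule i)
    qed
    show "\<Theta> n \<in> dual sc" for n
      using \<phi> unfolding \<Theta>_def embeds_in_product_def by simp
  qed
qed

end
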